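(* Let $(X,\mathcal{A},\mu)$ be a probability space, $\theta$ a measure-preserving endomorphism and $A\subset X$ a hole. Then the map $\varphi\mapsto\rho(A,\varphi)$, defined on the set of bounded ceiling functions $\varphi$ for which the escape rate $\rho(A,\varphi)$ exists, is continuous with respect to the supremum norm $\|\cdot\|_\infty$.
   Context: A ceiling function is a measurable $\varphi:X\to\mathbb{R}$ with $\inf\varphi>0$. $S_n\varphi=\sum_{k=0}^{n-1}\varphi\circ\theta^k$, $N_t^\varphi(x)=\min\{n\in\mathbb{N}_0:S_n\varphi(x)>t\}$. Special flow over $\theta$ under $\varphi$: $\overline{X}_\varphi=\{(x,s):0\le s<\varphi(x)\}$, $\overline{\mu}_\varphi$ the restriction of $\mu\otimes$Lebesgue, $\Phi^\varphi_t(x,s)=(x,s+t)$ if $t<\varphi(x)-s$, else $(\theta^{N-1}x,s+t-S_{N-1}\varphi(x))$ with $N=N^\varphi_{s+t}(x)$. A hole $A\subset X$ is a measurable set with $\bigcup_{n\ge0}\theta^{-n}(A)=X$ a.e. The escape rate $\rho(A,\varphi)$ is $\lim_{t\to\infty}-\frac1t\log\overline{\mu}_\varphi(\{(x,s):\forall\tau\in[0,t]:\Phi^\varphi_\tau(x,s)\notin A\times\mathbb{R}\})$ when the limit exists. *)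

theory Defs
  imports "HOL-Probability.Probability"
begin

definition measure_preserving_endo :: "'a measure \<Rightarrow> ('a \<Rightarrow> 'a) \<Rightarrow> bool" where
  "measure_preserving_endo M \<theta> \<longleftrightarrow> \<theta> \<in> measurable M M \<and> distr M M \<theta> = M"

definition birkhoff_sum :: "('a \<Rightarrow> 'a) \<Rightarrow> ('a \<Rightarrow> real) \<Rightarrow> nat \<Rightarrow> 'a \<Rightarrow> real" where
  "birkhoff_sum \<theta> \<phi> n x = (\<Sum>k<n. \<phi> ((\<theta> ^^ k) x))"

definition lap_number :: "('a \<Rightarrow> 'a) \<Rightarrow> ('a \<Rightarrow> real) \<Rightarrow> real \<Rightarrow> 'a \<Rightarrow> nat" where
  "lap_number \<theta> \<phi> t x = (LEAST n. birkhoff_sum \<theta> \<phi> n x > t)"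

definition special_flow :: "('a \<Rightarrow> 'a) \<Rightarrow> ('a \<Rightarrow> real) \<Rightarrow> real \<Rightarrow> 'a \<times> real \<Rightarrow> 'a \<times> real" where
  "special_flow \<theta> \<phi> t p = (case p of (x, s) \<Rightarrow>
     if t < \<phi> x - s then (x, s + t)
     else (let N = lap_number \<theta> \<phi> (s + t) x in
           ((\<theta> ^^ (N - 1)) x, s + t - birkhoff_sum \<theta> \<phi> (N - 1) x)))"

definition ceiling_function :: "'a measure \<Rightarrow> ('a \<Rightarrow> real) \<Rightarrow> bool" where
  "ceiling_function M \<phi> \<longleftrightarrow> \<phi> \<in> borel_measurable M \<and> (\<exists>c>0. \<forall>x\<in>space M. c \<le> \<phi> x)"

definition bounded_fun :: "'a measure \<Rightarrow> ('a \<Rightarrow> real) \<Rightarrow> bool" where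
  "bounded_fun M \<phi> \<longleftrightarrow> (\<exists>C. \<forall>x\<in>space M. \<bar>\<phi> x\<bar> \<le> C)"

definition hole :: "'a measure \<Rightarrow> ('a \<Rightarrow> 'a) \<Rightarrow> 'a set \<Rightarrow> bool" where
  "hole M \<theta> A \<longleftrightarrow> A \<in> sets M \<and> (AE x in M. \<exists>n. (\<theta> ^^ n) x \<in> A)"

definition surviving_set :: "'a measure \<Rightarrow> ('a \<Rightarrow> 'a) \<Rightarrow> 'a set \<Rightarrow> ('a \<Rightarrow> real) \<Rightarrow> real \<Rightarrow> ('a \<times> real) set" where
  "surviving_set M \<theta> A \<phi> t =
     {(x, s). x \<in> space M \<and> 0 \<le> s \<and> s < \<phi> x \<and>
              (\<forall>\<tau>\<in>{0..t}. fst (special_flow \<theta> \<phi> \<tau> (x, s)) \<notin> A)}"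

text \<open>The escape rate rho(A,phi) exists and equals r; the measure is mu (x) Lebesgue
  restricted to the suspension space (the surviving set lies inside it).\<close>
definition has_escape_rate :: "'a measure \<Rightarrow> ('a \<Rightarrow> 'a) \<Rightarrow> 'a set \<Rightarrow> ('a \<Rightarrow> real) \<Rightarrow> real \<Rightarrow> bool" where
  "has_escape_rate M \<theta> A \<phi> r \<longleftrightarrow>
     ((\<lambda>t. - (1 / t) * ln (measure (M \<Otimes>\<^sub>M lborel) (surviving_set M \<theta> A \<phi> t))) \<longlongrightarrow> r) at_top"

end

theory Submission
  imports Defs
begin

text \<open>Write \<open>H\<^sub>\<phi>(u)\<close> for the set of base points whose orbit reaches \<open>A\<close> only at flow
  times \<open>S\<^sub>n\<phi> x > u\<close>. For a ceiling \<open>c \<le> \<phi> \<le> C\<close> the surviving set at time \<open>t\<close> contains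
  \<open>H\<^sub>\<phi>(t + C) \<times> [0, c)\<close> and is contained in \<open>H\<^sub>\<phi>(t) \<times> [0, C)\<close>, so the escape rate is the
  exponential decay rate of \<open>\<mu>(H\<^sub>\<phi>(t))\<close>. If \<open>\<phi> \<le> l \<psi>\<close> then \<open>H\<^sub>\<phi>(u) \<subseteq> H\<^sub>\<psi>(u/l)\<close>:
  comparable ceilings only rescale time, hence \<open>\<rho>(A,\<psi>)/l \<le> \<rho>(A,\<phi>)\<close>. A sup-norm perturbation of size
  \<open>\<eta> inf \<phi>\<close> gives \<open>(1 - \<eta>)\<phi> \<le> \<psi> \<le> (1 + \<eta>)\<phi>\<close> and thus \<open>|\<rho>(A,\<psi>) - \<rho>(A,\<phi>)| \<le> 2\<eta>|\<rho>(A,\<phi>)|\<close>.\<close>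

definition hits_after :: "'a measure \<Rightarrow> ('a \<Rightarrow> 'a) \<Rightarrow> 'a set \<Rightarrow> ('a \<Rightarrow> real) \<Rightarrow> real \<Rightarrow> 'a set" where
  "hits_after M \<theta> A \<phi> u = {x \<in> space M. \<forall>n. (\<theta>^^n) x \<in> A \<longrightarrow> u < birkhoff_sum \<theta> \<phi> n x}"

lemma birkhoff_sum_0 [simp]: "birkhoff_sum \<theta> \<phi> 0 x = 0"
  by (simp add: birkhoff_sum_def)

lemma birkhoff_sum_Suc: "birkhoff_sum \<theta> \<phi> (Suc n) x = birkhoff_sum \<theta> \<phi> n x + \<phi> ((\<theta>^^n) x)"
  by (simp add: birkhoff_sum_def)

lemma birkhoff_sum_mono:
  assumes "\<And>k. 0 \<le> \<phi> ((\<theta>^^k) x)" and "m \<le> n"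
  shows "birkhoff_sum \<theta> \<phi> m x \<le> birkhoff_sum \<theta> \<phi> n x"
  unfolding birkhoff_sum_def using assms by (intro sum_mono2) auto

lemma birkhoff_sum_ge:
  assumes "\<And>k. c \<le> \<phi> ((\<theta>^^k) x)"
  shows "real n * c \<le> birkhoff_sum \<theta> \<phi> n x"
proof (induction n)
  case (Suc n)
  then show ?case using assms[of n] by (simp add: birkhoff_sum_Suc algebra_simps)
qed simp

lemma birkhoff_sum_le_scaled:
  assumes "\<And>k. \<phi> ((\<theta>^^k) x) \<le> l * \<psi> ((\<theta>^^k) x)"
  shows "birkhoff_sum \<theta> \<phi> n x \<le> l * birkhoff_sum \<theta> \<psi> n x"
  unfolding birkhoff_sum_def sum_distrib_left using assms by (rule sum_mono)

lemma lap_number_eq_Suc: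
  assumes "\<And>k. 0 \<le> \<phi> ((\<theta>^^k) x)"
    and "birkhoff_sum \<theta> \<phi> n x \<le> u" and "u < birkhoff_sum \<theta> \<phi> (Suc n) x"
  shows "lap_number \<theta> \<phi> u x = Suc n"
  unfolding lap_number_def
proof (rule Least_equality)
  fix m assume "u < birkhoff_sum \<theta> \<phi> m x"
  then show "Suc n \<le> m"
    using birkhoff_sum_mono[of \<phi> \<theta> x m n, OF assms(1)] assms(2) by force
qed (fact assms(3))

lemma lap_number_le_1: "u < \<phi> x \<Longrightarrow> lap_number \<theta> \<phi> u x \<le> 1"
  unfolding lap_number_def by (rule Least_le) (simp add: birkhoff_sum_def)

lemma birkhoff_sum_lap_number_le:
  assumes "\<And>k. c \<le> \<phi> ((\<theta>^^k) x)" and "0 < c" and "0 \<le> u"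
  shows "birkhoff_sum \<theta> \<phi> (lap_number \<theta> \<phi> u x - 1) x \<le> u"
proof -
  obtain n where "u < real n * c" using ex_less_of_nat_mult[OF \<open>0 < c\<close>] by blast
  also have "\<dots> \<le> birkhoff_sum \<theta> \<phi> n x" by (rule birkhoff_sum_ge) (rule assms(1))
  finally have "\<exists>n. u < birkhoff_sum \<theta> \<phi> n x" by blast
  then have "u < birkhoff_sum \<theta> \<phi> (lap_number \<theta> \<phi> u x) x"
    unfolding lap_number_def by (rule LeastI_ex)
  then have "lap_number \<theta> \<phi> u x - 1 < lap_number \<theta> \<phi> u x"
    using \<open>0 \<le> u\<close> by (cases "lap_number \<theta> \<phi> u x") auto
  then show ?thesis
    unfolding lap_number_def using not_less_Least by (metis not_less)
qed

lemma fst_special_flow: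
  "fst (special_flow \<theta> \<phi> \<tau> (x, s)) = (\<theta>^^(lap_number \<theta> \<phi> (s + \<tau>) x - 1)) x"
  using lap_number_le_1[of "s + \<tau>" \<phi> x \<theta>] by (auto simp: special_flow_def Let_def)

lemma special_flow_avoids_hole_iff:
  assumes orbit: "\<And>k. c \<le> \<phi> ((\<theta>^^k) x)" and "0 < c" and "0 \<le> t"
    and "0 \<le> s" and "s < \<phi> x"
  shows "(\<forall>\<tau>\<in>{0..t}. fst (special_flow \<theta> \<phi> \<tau> (x, s)) \<notin> A) \<longleftrightarrow>
         (\<forall>n. (\<theta>^^n) x \<in> A \<longrightarrow> s + t < birkhoff_sum \<theta> \<phi> n x)"
proof
  have nonneg: "\<And>k. 0 \<le> \<phi> ((\<theta>^^k) x)" using orbit \<open>0 < c\<close> by (meson less_le_trans less_imp_le)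
  assume survives: "\<forall>\<tau>\<in>{0..t}. fst (special_flow \<theta> \<phi> \<tau> (x, s)) \<notin> A"
  show "\<forall>n. (\<theta>^^n) x \<in> A \<longrightarrow> s + t < birkhoff_sum \<theta> \<phi> n x"
  proof (intro allI impI, rule ccontr)
    fix n assume "(\<theta>^^n) x \<in> A" and "\<not> s + t < birkhoff_sum \<theta> \<phi> n x"
    define u where "u = max s (birkhoff_sum \<theta> \<phi> n x)"
    have "s < birkhoff_sum \<theta> \<phi> (Suc n) x"
      using \<open>s < \<phi> x\<close> birkhoff_sum_mono[of \<phi> \<theta> x 1 "Suc n", OF nonneg]
      by (simp add: birkhoff_sum_def)
    moreover have "birkhoff_sum \<theta> \<phi> n x < birkhoff_sum \<theta> \<phi> (Suc n) x"
      using orbit[of n] \<open>0 < c\<close> by (simp add: birkhoff_sum_Suc)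
    ultimately have "lap_number \<theta> \<phi> (s + (u - s)) x = Suc n"
      by (intro lap_number_eq_Suc nonneg) (auto simp: u_def)
    then have "fst (special_flow \<theta> \<phi> (u - s) (x, s)) = (\<theta>^^n) x"
      by (simp add: fst_special_flow)
    moreover have "u - s \<in> {0..t}"
      using \<open>\<not> s + t < birkhoff_sum \<theta> \<phi> n x\<close> \<open>0 \<le> t\<close> by (auto simp: u_def)
    ultimately show False using survives \<open>(\<theta>^^n) x \<in> A\<close> by metis
  qed
next
  assume late: "\<forall>n. (\<theta>^^n) x \<in> A \<longrightarrow> s + t < birkhoff_sum \<theta> \<phi> n x"
  show "\<forall>\<tau>\<in>{0..t}. fst (special_flow \<theta> \<phi> \<tau> (x, s)) \<notin> A"
  proof
    fix \<tau> assume "\<tau> \<in> {0..t}"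
    define k where "k = lap_number \<theta> \<phi> (s + \<tau>) x - 1"
    have "birkhoff_sum \<theta> \<phi> k x \<le> s + \<tau>"
      unfolding k_def using orbit \<open>0 < c\<close> \<open>0 \<le> s\<close> \<open>\<tau> \<in> {0..t}\<close>
      by (intro birkhoff_sum_lap_number_le) auto
    then have "(\<theta>^^k) x \<notin> A" using late \<open>\<tau> \<in> {0..t}\<close> by force
    then show "fst (special_flow \<theta> \<phi> \<tau> (x, s)) \<notin> A" by (simp add: fst_special_flow k_def)
  qed
qed

lemma funpow_in_space: "\<theta> \<in> M \<rightarrow>\<^sub>M M \<Longrightarrow> x \<in> space M \<Longrightarrow> (\<theta>^^n) x \<in> space M"
  by (rule measurable_space[OF measurable_compose_n])

lemma surviving_set_eq:
  assumes "\<theta> \<in> M \<rightarrow>\<^sub>M M" and "0 < c" and "\<And>x. x \<in> space M \<Longrightarrow> c \<le> \<phi> x" and "0 \<le> t"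
  shows "surviving_set M \<theta> A \<phi> t = {(x, s). 0 \<le> s \<and> s < \<phi> x \<and> x \<in> hits_after M \<theta> A \<phi> (s + t)}"
proof -
  have "(\<forall>\<tau>\<in>{0..t}. fst (special_flow \<theta> \<phi> \<tau> (x, s)) \<notin> A) \<longleftrightarrow>
         (\<forall>n. (\<theta>^^n) x \<in> A \<longrightarrow> s + t < birkhoff_sum \<theta> \<phi> n x)"
    if "x \<in> space M" "0 \<le> s" "s < \<phi> x" for x s
    using assms that funpow_in_space[OF assms(1) that(1)] by (intro special_flow_avoids_hole_iff[where c=c]) auto
  then show ?thesis
    unfolding surviving_set_def hits_after_def by auto
qed

lemma sets_surviving_set:
  assumes "\<theta> \<in> M \<rightarrow>\<^sub>M M" and "A \<in> sets M" and "\<phi> \<in> borel_measurable M"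
  shows "{(x, s). 0 \<le> s \<and> s < \<phi> x \<and> x \<in> hits_after M \<theta> A \<phi> (s + t)} \<in> sets (M \<Otimes>\<^sub>M lborel)"
proof -
  have [measurable]: "\<theta>^^n \<in> M \<rightarrow>\<^sub>M M" for n using assms(1) by (rule measurable_compose_n)
  have "{(x, s). 0 \<le> s \<and> s < \<phi> x \<and> x \<in> hits_after M \<theta> A \<phi> (s + t)} =
    {p \<in> space (M \<Otimes>\<^sub>M lborel). 0 \<le> snd p \<and> snd p < \<phi> (fst p) \<and>
       (\<forall>n. (\<theta>^^n) (fst p) \<in> A \<longrightarrow> snd p + t < birkhoff_sum \<theta> \<phi> n (fst p))}"
    by (auto simp: hits_after_def space_pair_measure)
  also have "\<dots> \<in> sets (M \<Otimes>\<^sub>M lborel)"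
    unfolding birkhoff_sum_def using assms(2,3) by measurable
  finally show ?thesis .
qed

lemma sets_hits_after:
  assumes "\<theta> \<in> M \<rightarrow>\<^sub>M M" and "A \<in> sets M" and "\<phi> \<in> borel_measurable M"
  shows "hits_after M \<theta> A \<phi> u \<in> sets M"
proof -
  have [measurable]: "\<theta>^^n \<in> M \<rightarrow>\<^sub>M M" for n using assms(1) by (rule measurable_compose_n)
  show ?thesis unfolding hits_after_def birkhoff_sum_def using assms(2,3) by measurable
qed

lemma hits_after_antimono: "u \<le> v \<Longrightarrow> hits_after M \<theta> A \<phi> v \<subseteq> hits_after M \<theta> A \<phi> u"
  unfolding hits_after_def by auto

lemma hits_after_rescale:
  assumes "\<theta> \<in> M \<rightarrow>\<^sub>M M" and "0 < l" and "\<And>x. x \<in> space M \<Longrightarrow> \<phi> x \<le> l * \<psi> x"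
  shows "hits_after M \<theta> A \<phi> u \<subseteq> hits_after M \<theta> A \<psi> (u / l)"
proof
  fix x assume x: "x \<in> hits_after M \<theta> A \<phi> u"
  then have "x \<in> space M" by (simp add: hits_after_def)
  have "u / l < birkhoff_sum \<theta> \<psi> n x" if "(\<theta>^^n) x \<in> A" for n
  proof -
    have "u < birkhoff_sum \<theta> \<phi> n x" using x that by (simp add: hits_after_def)
    also have "\<dots> \<le> l * birkhoff_sum \<theta> \<psi> n x"
      using assms(1,3) funpow_in_space[OF _ \<open>x \<in> space M\<close>] by (intro birkhoff_sum_le_scaled) blast
    finally show ?thesis using \<open>0 < l\<close> by (simp add: divide_less_eq mult.commute)
  qed
  then show "x \<in> hits_after M \<theta> A \<psi> (u / l)"
    using \<open>x \<in> space M\<close> by (simp add: hits_after_def)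
qed

lemma measure_times_interval:
  assumes "finite_measure M" and "X \<in> sets M" and "0 \<le> C"
  shows "X \<times> {0..<C} \<in> fmeasurable (M \<Otimes>\<^sub>M lborel)"
    and "measure (M \<Otimes>\<^sub>M lborel) (X \<times> {0..<C}) = measure M X * C"
proof -
  interpret finite_measure M by fact
  have "emeasure (M \<Otimes>\<^sub>M lborel) (X \<times> {0..<C}) = ennreal (measure M X * C)"
    using lborel.emeasure_pair_measure_Times[OF \<open>X \<in> sets M\<close>, of "{0..<C}"] \<open>0 \<le> C\<close>
    by (simp add: emeasure_eq_measure ennreal_mult)
  then show "X \<times> {0..<C} \<in> fmeasurable (M \<Otimes>\<^sub>M lborel)"
    and "measure (M \<Otimes>\<^sub>M lborel) (X \<times> {0..<C}) = measure M X * C"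
    using \<open>X \<in> sets M\<close> \<open>0 \<le> C\<close> by (auto intro: fmeasurableI simp: measure_def)
qed

lemma measure_surviving_set_bounds:
  assumes "finite_measure M" and "\<theta> \<in> M \<rightarrow>\<^sub>M M" and "A \<in> sets M" and "\<phi> \<in> borel_measurable M"
    and "0 < c" and "c \<le> C" and bounds: "\<forall>x\<in>space M. c \<le> \<phi> x \<and> \<phi> x \<le> C"
    and "0 \<le> t"
  shows "measure M (hits_after M \<theta> A \<phi> (t + C)) * c \<le> measure (M \<Otimes>\<^sub>M lborel) (surviving_set M \<theta> A \<phi> t)"
    and "measure (M \<Otimes>\<^sub>M lborel) (surviving_set M \<theta> A \<phi> t) \<le> measure M (hits_after M \<theta> A \<phi> t) * C"
proof -
  let ?S = "surviving_set M \<theta> A \<phi> t" and ?H = "hits_after M \<theta> A \<phi>"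
  have S_eq: "?S = {(x, s). 0 \<le> s \<and> s < \<phi> x \<and> x \<in> ?H (s + t)}"
    using assms by (intro surviving_set_eq) auto
  have S_sets: "?S \<in> sets (M \<Otimes>\<^sub>M lborel)"
    unfolding S_eq using assms(2-4) by (rule sets_surviving_set)
  have H_sets: "?H u \<in> sets M" for u using assms(2-4) by (rule sets_hits_after)
  have sub_upper: "?S \<subseteq> ?H t \<times> {0..<C}"
    unfolding S_eq hits_after_def using bounds by fastforce
  have upper: "?H t \<times> {0..<C} \<in> fmeasurable (M \<Otimes>\<^sub>M lborel)"
    using assms by (intro measure_times_interval H_sets) auto
  have S_fin: "?S \<in> fmeasurable (M \<Otimes>\<^sub>M lborel)"
    by (rule fmeasurableI2[OF upper sub_upper S_sets])
  have "measure (M \<Otimes>\<^sub>M lborel) ?S \<le> measure (M \<Otimes>\<^sub>M lborel) (?H t \<times> {0..<C})"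
    by (rule measure_mono_fmeasurable[OF sub_upper S_sets upper])
  then show "measure (M \<Otimes>\<^sub>M lborel) ?S \<le> measure M (?H t) * C"
    using assms by (simp add: measure_times_interval(2)[OF assms(1) H_sets])
  have sub_lower: "?H (t + C) \<times> {0..<c} \<subseteq> ?S"
    unfolding S_eq hits_after_def using bounds by fastforce
  have "measure (M \<Otimes>\<^sub>M lborel) (?H (t + C) \<times> {0..<c}) \<le> measure (M \<Otimes>\<^sub>M lborel) ?S"
    by (rule measure_mono_fmeasurable[OF sub_lower _ S_fin]) (simp add: H_sets)
  then show "measure M (?H (t + C)) * c \<le> measure (M \<Otimes>\<^sub>M lborel) ?S"
    using assms by (simp add: measure_times_interval(2)[OF assms(1) H_sets])
qed

lemma measure_surviving_set_pos:
  assumes "finite_measure M" and "\<theta> \<in> M \<rightarrow>\<^sub>M M" and "A \<in> sets M" and "\<phi> \<in> borel_measurable M"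
    and "0 < c" and "c \<le> C" and "\<forall>x\<in>space M. c \<le> \<phi> x \<and> \<phi> x \<le> C"
    and "\<And>u. 0 < measure M (hits_after M \<theta> A \<phi> u)" and "0 \<le> t"
  shows "0 < measure (M \<Otimes>\<^sub>M lborel) (surviving_set M \<theta> A \<phi> t)"
  using mult_pos_pos[OF assms(8) \<open>0 < c\<close>] measure_surviving_set_bounds(1)[OF assms(1-7,9)]
  by (rule less_le_trans)

lemma decay_rate_le:
  fixes f g :: "real \<Rightarrow> real"
  assumes f: "((\<lambda>t. - (1/t) * ln (f t)) \<longlongrightarrow> r) at_top"
    and g: "((\<lambda>t. - (1/t) * ln (g t)) \<longlongrightarrow> r') at_top"
    and "0 < a" and "0 < K"
    and f_le: "eventually (\<lambda>t. 0 < f t \<and> f t \<le> K * g (a * t + b)) at_top"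
    and g_pos: "eventually (\<lambda>s. 0 < g s) at_top"
  shows "a * r' \<le> r"
proof -
  define s where "s t = a * t + b" for t
  have "filterlim (\<lambda>t. b + a * t) at_top at_top"
    using \<open>0 < a\<close> by (intro filterlim_tendsto_add_at_top[OF tendsto_const]
        filterlim_tendsto_pos_mult_at_top[OF tendsto_const _ filterlim_ident])
  then have s: "filterlim s at_top at_top"
    unfolding s_def[abs_def] by (simp add: add.commute)
  have "((\<lambda>t. a + b / t) \<longlongrightarrow> a + 0) at_top"
    by (intro tendsto_add[OF tendsto_const] real_tendsto_divide_at_top[OF tendsto_const filterlim_ident])
  moreover have "eventually (\<lambda>t. a + b / t = s t / t) at_top"
    using eventually_gt_at_top[of 0] by eventually_elim (simp add: s_def field_simps)
  ultimately have ratio: "((\<lambda>t. s t / t) \<longlongrightarrow> a) at_top"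
    by (simp add: tendsto_cong)
  have "((\<lambda>t. - ln K / t + (- (1 / s t) * ln (g (s t))) * (s t / t)) \<longlongrightarrow> 0 + r' * a) at_top"
    by (intro tendsto_add tendsto_mult real_tendsto_divide_at_top[OF tendsto_const filterlim_ident]
        filterlim_compose[OF g s] ratio)
  moreover have "eventually (\<lambda>t. - ln K / t + (- (1 / s t) * ln (g (s t))) * (s t / t)
      \<le> - (1/t) * ln (f t)) at_top"
    using f_le eventually_compose_filterlim[OF g_pos s]
      eventually_compose_filterlim[OF eventually_gt_at_top[of 0] s] eventually_gt_at_top[of 0]
  proof eventually_elim
    case (elim t)
    then have "ln (f t) \<le> ln (K * g (s t))"
      by (simp add: s_def)
    also have "\<dots> = ln K + ln (g (s t))"
      using elim \<open>0 < K\<close> by (simp add: ln_mult)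
    finally have "t * ln (f t) \<le> t * (ln K + ln (g (s t)))"
      using elim by (intro mult_left_mono) auto
    then show ?case
      using elim by (simp add: field_simps)
  qed
  ultimately show ?thesis
    using tendsto_le[OF _ f] by (simp add: mult.commute)
qed

lemma decay_rate_eq_0:
  fixes f :: "real \<Rightarrow> real"
  assumes "((\<lambda>t. - (1/t) * ln (f t)) \<longlongrightarrow> r) at_top" and "eventually (\<lambda>t. f t = 0) at_top"
  shows "r = 0"
proof -
  have "((\<lambda>t. - (1/t) * ln (f t)) \<longlongrightarrow> 0) at_top"
    using assms(2) by (intro Lim_transform_eventually[OF tendsto_const]) (auto elim: eventually_mono)
  then show ?thesis using assms(1) tendsto_unique by force
qed

lemma abs_diff_le_of_ratio_bounds:
  fixes r r' \<eta> :: real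
  assumes "0 < \<eta>" and "\<eta> \<le> 1/2" and "r / (1 + \<eta>) \<le> r'" and "r' * (1 - \<eta>) \<le> r"
  shows "\<bar>r' - r\<bar> \<le> 2 * \<eta> * \<bar>r\<bar>"
proof -
  have "r - r' \<le> \<eta> * r / (1 + \<eta>)"
    using assms(1,3) by (simp add: field_simps)
  moreover have "r' - r \<le> \<eta> * r / (1 - \<eta>)"
    using assms(2,4) by (simp add: field_simps)
  moreover have small: "\<bar>\<eta> * r / d\<bar> \<le> 2 * \<eta> * \<bar>r\<bar>" if "1/2 \<le> d" for d
    using that assms(1) mult_right_mono[of 1 "2 * d" "\<bar>r\<bar>"]
    by (simp add: abs_mult divide_le_eq field_simps)
  ultimately show ?thesis
    using small[of "1 + \<eta>"] small[of "1 - \<eta>"] assms(1,2) unfolding abs_le_iff by linarith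
qed

lemma bounded_ceiling_functionE:
  assumes "ceiling_function M \<phi>" and "bounded_fun M \<phi>"
  obtains c C where "0 < c" and "c \<le> C" and "\<forall>x\<in>space M. c \<le> \<phi> x \<and> \<phi> x \<le> C"
proof -
  obtain c where "0 < c" "\<forall>x\<in>space M. c \<le> \<phi> x"
    using assms(1) by (auto simp: ceiling_function_def)
  moreover obtain C where "\<forall>x\<in>space M. \<bar>\<phi> x\<bar> \<le> C"
    using assms(2) by (auto simp: bounded_fun_def)
  ultimately show ?thesis
    by (intro that[of c "max c C"]) auto
qed

lemma measure_hits_after_rescale_le:
  assumes "finite_measure M" and "\<theta> \<in> M \<rightarrow>\<^sub>M M" and "A \<in> sets M" and "\<psi> \<in> borel_measurable M"
    and "0 < l" and "\<And>x. x \<in> space M \<Longrightarrow> \<phi> x \<le> l * \<psi> x"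
  shows "measure M (hits_after M \<theta> A \<phi> u) \<le> measure M (hits_after M \<theta> A \<psi> (u / l))"
  using assms by (intro finite_measure.finite_measure_mono hits_after_rescale sets_hits_after)

lemma escape_rate_rescale_le:
  assumes M: "finite_measure M" and \<theta>: "\<theta> \<in> M \<rightarrow>\<^sub>M M" and A: "A \<in> sets M"
    and "ceiling_function M \<phi>" "bounded_fun M \<phi>" "ceiling_function M \<psi>" "bounded_fun M \<psi>"
    and "0 < l" and le: "\<And>x. x \<in> space M \<Longrightarrow> \<phi> x \<le> l * \<psi> x"
    and pos: "\<And>u. 0 < measure M (hits_after M \<theta> A \<phi> u)"
    and "has_escape_rate M \<theta> A \<phi> r" and "has_escape_rate M \<theta> A \<psi> r'"
  shows "r' / l \<le> r"
proof -
  obtain c C where c: "0 < c" "c \<le> C" "\<forall>x\<in>space M. c \<le> \<phi> x \<and> \<phi> x \<le> C"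
    using bounded_ceiling_functionE[OF assms(4,5)] by blast
  obtain d D where d: "0 < d" "d \<le> D" "\<forall>x\<in>space M. d \<le> \<psi> x \<and> \<psi> x \<le> D"
    using bounded_ceiling_functionE[OF assms(6,7)] by blast
  have m\<phi>: "\<phi> \<in> borel_measurable M" and m\<psi>: "\<psi> \<in> borel_measurable M"
    using assms(4,6) by (simp_all add: ceiling_function_def)
  let ?S\<phi> = "\<lambda>t. measure (M \<Otimes>\<^sub>M lborel) (surviving_set M \<theta> A \<phi> t)"
  let ?S\<psi> = "\<lambda>t. measure (M \<Otimes>\<^sub>M lborel) (surviving_set M \<theta> A \<psi> t)"
  let ?H\<phi> = "\<lambda>u. measure M (hits_after M \<theta> A \<phi> u)"
  let ?H\<psi> = "\<lambda>u. measure M (hits_after M \<theta> A \<psi> u)"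
  note bounds\<phi> = measure_surviving_set_bounds[OF M \<theta> A m\<phi> c]
  note bounds\<psi> = measure_surviving_set_bounds[OF M \<theta> A m\<psi> d]
  have H\<phi>\<psi>: "?H\<phi> u \<le> ?H\<psi> (u / l)" for u
    using M \<theta> A m\<psi> \<open>0 < l\<close> le by (rule measure_hits_after_rescale_le)
  have H\<psi>_pos: "0 < ?H\<psi> u" for u
    using pos[of "l * u"] H\<phi>\<psi>[of "l * u"] \<open>0 < l\<close> by simp
  have "(1 / l) * r' \<le> r"
  proof (rule decay_rate_le[where K = "C / d" and b = "- D"])
    show "((\<lambda>t. - (1/t) * ln (?S\<phi> t)) \<longlongrightarrow> r) at_top"
      and "((\<lambda>t. - (1/t) * ln (?S\<psi> t)) \<longlongrightarrow> r') at_top"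
      using assms(11,12) by (simp_all add: has_escape_rate_def)
    show "0 < 1 / l" and "0 < C / d" using \<open>0 < l\<close> c d by simp_all
    show "eventually (\<lambda>s. 0 < ?S\<psi> s) at_top"
      using eventually_ge_at_top[of 0]
      by eventually_elim (rule measure_surviving_set_pos[OF M \<theta> A m\<psi> d H\<psi>_pos])
    show "eventually (\<lambda>t. 0 < ?S\<phi> t \<and> ?S\<phi> t \<le> C / d * ?S\<psi> (1 / l * t + - D)) at_top"
      using eventually_ge_at_top[of "l * D"]
    proof eventually_elim
      case (elim t)
      have "0 \<le> t" and s: "0 \<le> 1 / l * t + - D"
        using elim \<open>0 < l\<close> c d by (auto simp: field_simps intro: order_trans[rotated])
      have "0 < ?S\<phi> t" by (rule measure_surviving_set_pos[OF M \<theta> A m\<phi> c pos \<open>0 \<le> t\<close>])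
      moreover have "?S\<phi> t \<le> C / d * ?S\<psi> (1 / l * t + - D)"
      proof -
        have "?S\<phi> t \<le> ?H\<phi> t * C" by (rule bounds\<phi>(2)[OF \<open>0 \<le> t\<close>])
        also have "\<dots> \<le> ?H\<psi> (t / l) * C" using H\<phi>\<psi>[of t] c by (intro mult_right_mono) auto
        also have "\<dots> \<le> ?S\<psi> (1 / l * t + - D) / d * C"
          using bounds\<psi>(1)[OF s] c d by (intro mult_right_mono) (auto simp: le_divide_eq)
        finally show ?thesis by (simp add: mult.commute)
      qed
      ultimately show ?case ..
    qed
  qed
  then show ?thesis by simp
qed

text \<open>The surviving measure vanishes for large times, and since \<open>ln 0 = 0\<close> in HOL the escape rate
  is then 0 (mathematically it is infinite).\<close>

lemma escape_rate_eq_0: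
  assumes M: "finite_measure M" and \<theta>: "\<theta> \<in> M \<rightarrow>\<^sub>M M" and A: "A \<in> sets M"
    and "ceiling_function M \<phi>" "bounded_fun M \<phi>"
    and null: "measure M (hits_after M \<theta> A \<phi> u) = 0" and "has_escape_rate M \<theta> A \<phi> r"
  shows "r = 0"
proof (rule decay_rate_eq_0)
  show "((\<lambda>t. - (1/t) * ln (measure (M \<Otimes>\<^sub>M lborel) (surviving_set M \<theta> A \<phi> t))) \<longlongrightarrow> r) at_top"
    using assms(7) by (simp add: has_escape_rate_def)
  obtain c C where c: "0 < c" "c \<le> C" "\<forall>x\<in>space M. c \<le> \<phi> x \<and> \<phi> x \<le> C"
    using bounded_ceiling_functionE[OF assms(4,5)] by blast
  have m\<phi>: "\<phi> \<in> borel_measurable M"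
    using assms(4) by (simp add: ceiling_function_def)
  show "eventually (\<lambda>t. measure (M \<Otimes>\<^sub>M lborel) (surviving_set M \<theta> A \<phi> t) = 0) at_top"
    using eventually_ge_at_top[of "max 0 u"]
  proof eventually_elim
    case (elim t)
    have "measure (M \<Otimes>\<^sub>M lborel) (surviving_set M \<theta> A \<phi> t) \<le> measure M (hits_after M \<theta> A \<phi> t) * C"
      using elim by (intro measure_surviving_set_bounds(2)[OF M \<theta> A m\<phi> c]) simp
    also have "\<dots> \<le> measure M (hits_after M \<theta> A \<phi> u) * C"
      using elim c by (intro mult_right_mono finite_measure.finite_measure_mono[OF M] hits_after_antimono
          sets_hits_after[OF \<theta> A m\<phi>]) auto
    finally show ?case using null by (simp add: measure_nonneg antisym)
  qed
qed

lemma escape_rate_dist_le: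
  assumes M: "finite_measure M" and \<theta>: "\<theta> \<in> M \<rightarrow>\<^sub>M M" and A: "A \<in> sets M"
    and \<phi>: "ceiling_function M \<phi>" "bounded_fun M \<phi>" and \<psi>: "ceiling_function M \<psi>" "bounded_fun M \<psi>"
    and "0 < \<eta>" and "\<eta> \<le> 1/2"
    and close: "\<And>x. x \<in> space M \<Longrightarrow> (1 - \<eta>) * \<phi> x \<le> \<psi> x \<and> \<psi> x \<le> (1 + \<eta>) * \<phi> x"
    and r: "has_escape_rate M \<theta> A \<phi> r" and r': "has_escape_rate M \<theta> A \<psi> r'"
  shows "\<bar>r' - r\<bar> \<le> 2 * \<eta> * \<bar>r\<bar>"
proof -
  have m\<phi>: "\<phi> \<in> borel_measurable M" and m\<psi>: "\<psi> \<in> borel_measurable M"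
    using \<phi> \<psi> by (simp_all add: ceiling_function_def)
  have \<psi>_le: "\<psi> x \<le> (1 + \<eta>) * \<phi> x" if "x \<in> space M" for x
    using close[OF that] by simp
  have \<phi>_le: "\<phi> x \<le> 1 / (1 - \<eta>) * \<psi> x" if "x \<in> space M" for x
    using close[OF that] \<open>\<eta> \<le> 1/2\<close> by (simp add: field_simps)
  have pos_1: "0 < 1 + \<eta>" and pos_2: "0 < 1 / (1 - \<eta>)"
    using \<open>0 < \<eta>\<close> \<open>\<eta> \<le> 1/2\<close> by simp_all
  show ?thesis
  proof (cases "\<forall>u. 0 < measure M (hits_after M \<theta> A \<phi> u)")
    case True
    have \<psi>_pos: "0 < measure M (hits_after M \<theta> A \<psi> u)" for u
      using True[rule_format, of "u / (1 - \<eta>)"] pos_2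
        measure_hits_after_rescale_le[OF M \<theta> A m\<psi> pos_2 \<phi>_le, of "u / (1 - \<eta>)"]
      by simp
    have "r / (1 + \<eta>) \<le> r'"
      by (rule escape_rate_rescale_le[OF M \<theta> A \<psi> \<phi> pos_1 \<psi>_le \<psi>_pos r' r])
    moreover have "r' / (1 / (1 - \<eta>)) \<le> r"
      by (rule escape_rate_rescale_le[OF M \<theta> A \<phi> \<psi> pos_2 \<phi>_le True[rule_format] r r'])
    ultimately show ?thesis
      using \<open>0 < \<eta>\<close> \<open>\<eta> \<le> 1/2\<close> by (intro abs_diff_le_of_ratio_bounds) simp_all
  next
    case False
    then obtain u where null: "measure M (hits_after M \<theta> A \<phi> u) = 0"
      using measure_nonneg[of M] by (metis order_le_less)
    then have "measure M (hits_after M \<theta> A \<psi> ((1 + \<eta>) * u)) = 0"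
      using measure_hits_after_rescale_le[OF M \<theta> A m\<phi> pos_1 \<psi>_le, of "(1 + \<eta>) * u"] pos_1
      by (simp add: measure_nonneg antisym)
    then have "r' = 0"
      by (rule escape_rate_eq_0[OF M \<theta> A \<psi> _ r'])
    moreover have "r = 0"
      by (rule escape_rate_eq_0[OF M \<theta> A \<phi> null r])
    ultimately show ?thesis by simp
  qed
qed

lemma relative_bounds_of_abs_diff_le:
  fixes a b c \<eta> :: real
  assumes "0 \<le> \<eta>" and "c \<le> a" and "\<bar>b - a\<bar> \<le> \<eta> * c"
  shows "(1 - \<eta>) * a \<le> b \<and> b \<le> (1 + \<eta>) * a"
proof -
  have "\<bar>b - a\<bar> \<le> \<eta> * a"
    using assms mult_left_mono[of c a \<eta>] by linarith
  then show ?thesis by (simp add: algebra_simps abs_le_iff)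
qed

theorem proposition3p12:
  fixes M :: "'a measure" and \<theta> :: "'a \<Rightarrow> 'a" and A :: "'a set"
  assumes "prob_space M"
    and "measure_preserving_endo M \<theta>"
    and "hole M \<theta> A"
    and "ceiling_function M \<phi>" and "bounded_fun M \<phi>" and "has_escape_rate M \<theta> A \<phi> r"
  shows "\<forall>\<epsilon>>0. \<exists>\<delta>>0. \<forall>\<psi> r'. ceiling_function M \<psi> \<and> bounded_fun M \<psi> \<and>
           has_escape_rate M \<theta> A \<psi> r' \<and> (\<forall>x\<in>space M. \<bar>\<psi> x - \<phi> x\<bar> \<le> \<delta>)
           \<longrightarrow> \<bar>r' - r\<bar> < \<epsilon>"
proof (intro allI impI)
  fix \<epsilon> :: real assume "0 < \<epsilon>"
  have M: "finite_measure M" using assms(1) by (rule prob_space.finite_measure)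
  have \<theta>: "\<theta> \<in> M \<rightarrow>\<^sub>M M" and A: "A \<in> sets M"
    using assms(2,3) by (simp_all add: measure_preserving_endo_def hole_def)
  obtain c where "0 < c" and c: "\<forall>x\<in>space M. c \<le> \<phi> x"
    using assms(4) by (auto simp: ceiling_function_def)
  define \<eta> where "\<eta> = min (1/2) (\<epsilon> / (2 * (\<bar>r\<bar> + 1)))"
  have "0 < \<eta>" and "\<eta> \<le> 1/2" and "2 * \<eta> * \<bar>r\<bar> < \<epsilon>"
    using \<open>0 < \<epsilon>\<close> by (auto simp: \<eta>_def min_def field_simps)
  show "\<exists>\<delta>>0. \<forall>\<psi> r'. ceiling_function M \<psi> \<and> bounded_fun M \<psi> \<and>
           has_escape_rate M \<theta> A \<psi> r' \<and> (\<forall>x\<in>space M. \<bar>\<psi> x - \<phi> x\<bar> \<le> \<delta>)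
           \<longrightarrow> \<bar>r' - r\<bar> < \<epsilon>"
  proof (intro exI[of _ "\<eta> * c"] conjI allI impI)
    show "0 < \<eta> * c" using \<open>0 < \<eta>\<close> \<open>0 < c\<close> by simp
    fix \<psi> r' assume \<psi>: "ceiling_function M \<psi> \<and> bounded_fun M \<psi> \<and> has_escape_rate M \<theta> A \<psi> r' \<and>
      (\<forall>x\<in>space M. \<bar>\<psi> x - \<phi> x\<bar> \<le> \<eta> * c)"
    have "(1 - \<eta>) * \<phi> x \<le> \<psi> x \<and> \<psi> x \<le> (1 + \<eta>) * \<phi> x" if "x \<in> space M" for x
      using \<psi> c that \<open>0 < \<eta>\<close> by (intro relative_bounds_of_abs_diff_le[where c = c]) auto
    then have "\<bar>r' - r\<bar> \<le> 2 * \<eta> * \<bar>r\<bar>"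
      using \<psi> by (intro escape_rate_dist_le[OF M \<theta> A assms(4,5) _ _ \<open>0 < \<eta>\<close> \<open>\<eta> \<le> 1/2\<close> _ assms(6)]) auto
    then show "\<bar>r' - r\<bar> < \<epsilon>" using \<open>2 * \<eta> * \<bar>r\<bar> < \<epsilon>\<close> by linarith
  qed
qed

end
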